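(* Let $V=[n]$, let $\mathbb V=\{V_1,\dots,V_k\}$ be a partition of $V$ into nonempty classes, let $d:\mathbb V\to\mathbb N$, and let $D^*=(d_{ij})$ be a symmetric $k\times k$ matrix with entries in $\mathbb N\cup\{*\}$. If $\langle\mathbb V,d,D^*\rangle\neq\emptyset$, then there exists a balanced $\langle\mathbb V,d,D^*\rangle$ graph.
   Context: $\mathbb N$ denotes the nonnegative integers. $\langle\mathbb V,d,D^*\rangle$ is the set of simple graphs $G$ on $V$ such that every vertex of $V_i$ has degree $d(V_i)$, and for every pair $i\le j$ with $d_{ij}\neq *$, the number of edges of $G$ between $V_i$ and $V_j$ (with both endpoints in $V_i$ if $i=j$) is exactly $d_{ij}$; pairs with $d_{ij}=*$ are unconstrained. For $G\in\langle\mathbb V,d,D^*\rangle$ let $H$ be the spanning subgraph of $G$ consisting of the edges $uv$ of $G$ with $u\in V_i$, $v\in V_j$ and $d_{ij}\neq *$. $G$ is a balanced $\langle\mathbb V,d,D^*\rangle$ graph if $H$ satisfies the balanced degree invariant: for every $i$, $\max_{v\in V_i}\deg_H(v)-\min_{v\in V_i}\deg_H(v)\le 1$. *)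

theory Defs
  imports Main
begin

text \<open>The partition into classes V_0,...,V_(k-1) is
given by a class map cls: vertex v lies in class cls v (< k). d i is the degree
prescribed for class i. D i j = None encodes *, D i j = Some m the exact count m.\<close>

definition cls_set :: "nat \<Rightarrow> (nat \<Rightarrow> nat) \<Rightarrow> nat \<Rightarrow> nat set" where
  "cls_set n cls i = {v \<in> {1..n}. cls v = i}"

definition is_partition :: "nat \<Rightarrow> nat \<Rightarrow> (nat \<Rightarrow> nat) \<Rightarrow> bool" where
  "is_partition n k cls \<longleftrightarrow> (\<forall>v\<in>{1..n}. cls v < k) \<and> (\<forall>i<k. cls_set n cls i \<noteq> {})"

definition simple_graph_on :: "nat set \<Rightarrow> nat set set \<Rightarrow> bool" where
  "simple_graph_on V E \<longleftrightarrow> (\<forall>e\<in>E. e \<subseteq> V \<and> card e = 2)"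

definition deg :: "nat set set \<Rightarrow> nat \<Rightarrow> nat" where
  "deg E v = card {e \<in> E. v \<in> e}"

definition edges_between :: "(nat \<Rightarrow> nat) \<Rightarrow> nat set set \<Rightarrow> nat \<Rightarrow> nat \<Rightarrow> nat set set" where
  "edges_between cls E i j = {e \<in> E. \<exists>u v. e = {u, v} \<and> u \<noteq> v \<and> cls u = i \<and> cls v = j}"

definition in_VdD :: "nat \<Rightarrow> nat \<Rightarrow> (nat \<Rightarrow> nat) \<Rightarrow> (nat \<Rightarrow> nat) \<Rightarrow> (nat \<Rightarrow> nat \<Rightarrow> nat option)
    \<Rightarrow> nat set set \<Rightarrow> bool" where
  "in_VdD n k cls d D E \<longleftrightarrow> simple_graph_on {1..n} E
     \<and> (\<forall>v\<in>{1..n}. deg E v = d (cls v))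
     \<and> (\<forall>i<k. \<forall>j<k. i \<le> j \<longrightarrow> (\<forall>m. D i j = Some m \<longrightarrow> card (edges_between cls E i j) = m))"

definition constrained_part :: "(nat \<Rightarrow> nat) \<Rightarrow> (nat \<Rightarrow> nat \<Rightarrow> nat option) \<Rightarrow> nat set set \<Rightarrow> nat set set" where
  "constrained_part cls D E = {e \<in> E. \<exists>u v. e = {u, v} \<and> D (cls u) (cls v) \<noteq> None}"

definition balanced_VdD :: "nat \<Rightarrow> nat \<Rightarrow> (nat \<Rightarrow> nat) \<Rightarrow> (nat \<Rightarrow> nat) \<Rightarrow> (nat \<Rightarrow> nat \<Rightarrow> nat option)
    \<Rightarrow> nat set set \<Rightarrow> bool" where
  "balanced_VdD n k cls d D E \<longleftrightarrow> in_VdD n k cls d D E \<and>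
     (\<forall>i<k. Max (deg (constrained_part cls D E) ` cls_set n cls i)
            - Min (deg (constrained_part cls D E) ` cls_set n cls i) \<le> 1)"

end

theory Submission
  imports Defs
begin

text \<open>Minimise the potential \<open>\<Sum>v. deg\<^sub>H(v)\<^sup>2\<close> over \<open>\<langle>\<V>,d,D\<^sup>*\<rangle>\<close>. If some class contains vertices
  \<open>u, w\<close> with \<open>deg\<^sub>H(w) + 2 \<le> deg\<^sub>H(u)\<close>, then, as \<open>u\<close> and \<open>w\<close> have the same degree in \<open>G\<close>, there
  are a constrained neighbour \<open>x\<close> of \<open>u\<close> and an unconstrained neighbour \<open>y\<close> of \<open>w\<close> such that
  the edges \<open>ux, wy\<close> can be switched to the non-edges \<open>wx, uy\<close>. Being constrained only depends
  on the classes of the endpoints, so this switch keeps all degrees and all counts \<open>d\<^sub>i\<^sub>j\<close>, while it moves one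
  unit of \<open>H\<close>-degree from \<open>u\<close> to \<open>w\<close> and thereby lowers the potential.\<close>

definition constrained_edge :: "(nat \<Rightarrow> nat) \<Rightarrow> (nat \<Rightarrow> nat \<Rightarrow> nat option) \<Rightarrow> nat set \<Rightarrow> bool" where
  "constrained_edge cls D e \<longleftrightarrow> (\<exists>u v. e = {u, v} \<and> D (cls u) (cls v) \<noteq> None)"

definition potential :: "nat \<Rightarrow> (nat \<Rightarrow> nat) \<Rightarrow> (nat \<Rightarrow> nat \<Rightarrow> nat option) \<Rightarrow> nat set set \<Rightarrow> nat" where
  "potential n cls D E = (\<Sum>v\<in>{1..n}. (deg (constrained_part cls D E) v)\<^sup>2)"

definition switch :: "nat \<Rightarrow> nat \<Rightarrow> nat \<Rightarrow> nat \<Rightarrow> nat set set \<Rightarrow> nat set set" where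
  "switch u x w y E = (E - {{u, x}, {w, y}}) \<union> {{w, x}, {u, y}}"

lemma constrained_edge_doubleton_iff:
  assumes "\<forall>i<k. \<forall>j<k. D i j = D j i" "cls a < k" "cls b < k"
  shows "constrained_edge cls D {a, b} \<longleftrightarrow> D (cls a) (cls b) \<noteq> None"
  using assms unfolding constrained_edge_def by (auto simp: doubleton_eq_iff)

lemma doubleton_between_iff:
  assumes "a \<noteq> b"
  shows "(\<exists>p q. {a, b} = {p, q} \<and> p \<noteq> q \<and> cls p = i \<and> cls q = j)
      \<longleftrightarrow> (cls a = i \<and> cls b = j \<or> cls b = i \<and> cls a = j)"
  using assms by (auto simp: doubleton_eq_iff)

lemma deg_constrained_part:
  "deg (constrained_part cls D E) v = card {e \<in> E. constrained_edge cls D e \<and> v \<in> e}"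
  unfolding deg_def constrained_part_def constrained_edge_def by (rule arg_cong[where f = card]) auto

lemma card_incident_eq_card_neighbours:
  assumes "simple_graph_on V E"
  shows "card {e \<in> E. P e \<and> v \<in> e} = card {x. {v, x} \<in> E \<and> P {v, x}}"
proof -
  have "bij_betw (\<lambda>x. {v, x}) {x. {v, x} \<in> E \<and> P {v, x}} {e \<in> E. P e \<and> v \<in> e}"
  proof (rule bij_betwI')
    fix x y assume "x \<in> {x. {v, x} \<in> E \<and> P {v, x}}" "y \<in> {x. {v, x} \<in> E \<and> P {v, x}}"
    then have "card {v, x} = 2" "card {v, y} = 2"
      using assms unfolding simple_graph_on_def by auto
    then show "({v, x} = {v, y}) = (x = y)" by (auto simp: doubleton_eq_iff)
  next
    fix e assume e: "e \<in> {e \<in> E. P e \<and> v \<in> e}"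
    then have "card e = 2" using assms unfolding simple_graph_on_def by auto
    then obtain a b where "e = {a, b}" by (auto simp: card_2_iff)
    with e show "\<exists>x\<in>{x. {v, x} \<in> E \<and> P {v, x}}. e = {v, x}"
      by (auto simp: insert_commute)
  qed auto
  then show ?thesis by (simp add: bij_betw_same_card)
qed

lemma card_filter_doubleton:
  assumes "a \<noteq> b"
  shows "card {x \<in> {a, b}. P x} = of_bool (P a) + of_bool (P b)"
proof -
  have "{x \<in> {a, b}. P x} = (if P a then {a} else {}) \<union> (if P b then {b} else {})" by auto
  then show ?thesis using assms by simp
qed

lemma card_filter_switch:
  assumes "finite E" "{u, x} \<in> E" "{w, y} \<in> E" "{w, x} \<notin> E" "{u, y} \<notin> E"
    and "{u, x} \<noteq> {w, y}" "{w, x} \<noteq> {u, y}"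
  shows "card {e \<in> switch u x w y E. P e} + of_bool (P {u, x}) + of_bool (P {w, y})
       = card {e \<in> E. P e} + of_bool (P {w, x}) + of_bool (P {u, y})"
proof -
  let ?A = "{e \<in> E. P e}"
  have "{e \<in> switch u x w y E. P e} = (?A - {{u, x}, {w, y}}) \<union> {f \<in> {{w, x}, {u, y}}. P f}"
    unfolding switch_def by auto
  moreover have "(?A - {{u, x}, {w, y}}) \<inter> {f \<in> {{w, x}, {u, y}}. P f} = {}"
    using assms by auto
  ultimately have "card {e \<in> switch u x w y E. P e}
      = card (?A - {{u, x}, {w, y}}) + card {f \<in> {{w, x}, {u, y}}. P f}"
    using assms(1) by (simp add: card_Un_disjoint)
  then have "card {e \<in> switch u x w y E. P e}
      = card (?A - {{u, x}, {w, y}}) + of_bool (P {w, x}) + of_bool (P {u, y})"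
    using card_filter_doubleton[OF assms(7)] by simp
  moreover have "card (?A - {{u, x}, {w, y}}) + card (?A \<inter> {{u, x}, {w, y}}) = card ?A"
    using card_Int_Diff[of ?A "{{u, x}, {w, y}}"] assms(1) by simp
  moreover have "?A \<inter> {{u, x}, {w, y}} = {e \<in> {{u, x}, {w, y}}. P e}"
    using assms(2,3) by auto
  ultimately show ?thesis using card_filter_doubleton[OF assms(6)] by simp
qed

lemma exists_not_in_smaller_card:
  assumes "finite B" "card B + 2 \<le> card A"
  obtains x where "x \<in> A" "x \<noteq> w" "x \<notin> B"
proof -
  have "card (insert w B) < card A"
    using assms by (simp add: card_insert_if)
  then have "\<not> A \<subseteq> insert w B"
    using assms(1) by (meson card_mono finite_insert leD)
  then show ?thesis using that by blast
qed

lemma sum_squares_less_after_transfer: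
  fixes f g :: "'a \<Rightarrow> nat"
  assumes "finite V" "u \<in> V" "w \<in> V" "u \<noteq> w" "f w + 2 \<le> f u"
    and "g u + 1 = f u" "g w = f w + 1" "\<And>v. v \<noteq> u \<Longrightarrow> v \<noteq> w \<Longrightarrow> g v = f v"
  shows "(\<Sum>v\<in>V. (g v)\<^sup>2) < (\<Sum>v\<in>V. (f v)\<^sup>2)"
proof -
  have split: "(\<Sum>v\<in>V. (h v)\<^sup>2) = (h u)\<^sup>2 + (h w)\<^sup>2 + (\<Sum>v\<in>V - {u} - {w}. (h v)\<^sup>2)"
    for h :: "'a \<Rightarrow> nat"
    using assms(1-4) sum.remove[of V u "\<lambda>v. (h v)\<^sup>2"] sum.remove[of "V - {u}" w "\<lambda>v. (h v)\<^sup>2"]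
    by simp
  have rest: "(\<Sum>v\<in>V - {u} - {w}. (g v)\<^sup>2) = (\<Sum>v\<in>V - {u} - {w}. (f v)\<^sup>2)"
    using assms(8) by (intro sum.cong) auto
  have "f w + 1 \<le> g u" using assms(5,6) by linarith
  then have "(g u)\<^sup>2 + (f w + 1)\<^sup>2 < (g u + 1)\<^sup>2 + (f w)\<^sup>2"
    by (simp add: power2_eq_square algebra_simps)
  then have "(g u)\<^sup>2 + (g w)\<^sup>2 < (f u)\<^sup>2 + (f w)\<^sup>2"
    using assms(6,7) by simp
  then show ?thesis unfolding split[of f] split[of g] rest by linarith
qed

lemma simple_graph_on_finite:
  assumes "simple_graph_on {1..n} E"
  shows "finite E"
  using assms unfolding simple_graph_on_def by (meson Pow_iff finite_Pow_iff finite_atLeastAtMost finite_subset subsetI)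

lemma in_VdD_switch:
  assumes G: "in_VdD n k cls d D E" and "cls u = cls w"
    and edges: "{u, x} \<in> E" "{w, y} \<in> E" "{w, x} \<notin> E" "{u, y} \<notin> E"
    and "u \<noteq> w" "x \<noteq> w" "y \<noteq> u"
  shows "in_VdD n k cls d D (switch u x w y E)"
proof -
  have sg: "simple_graph_on {1..n} E" using G unfolding in_VdD_def by simp
  then have "u \<noteq> x" "w \<noteq> y" "u \<in> {1..n}" "w \<in> {1..n}" "x \<in> {1..n}" "y \<in> {1..n}"
    using edges(1,2) unfolding simple_graph_on_def by (fastforce simp: card_insert_if)+
  have "{u, x} \<noteq> {w, y}" "{w, x} \<noteq> {u, y}"
    using \<open>u \<noteq> w\<close> \<open>w \<noteq> y\<close> \<open>x \<noteq> w\<close> by (auto simp: doubleton_eq_iff)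
  note count = card_filter_switch[OF simple_graph_on_finite[OF sg] edges this]
  have "simple_graph_on {1..n} (switch u x w y E)"
    using sg \<open>x \<noteq> w\<close> \<open>y \<noteq> u\<close> \<open>u \<in> _\<close> \<open>w \<in> _\<close> \<open>x \<in> _\<close> \<open>y \<in> _\<close>
    unfolding simple_graph_on_def switch_def by auto
  moreover have "deg (switch u x w y E) v = deg E v" for v
    using count[of "\<lambda>e. v \<in> e"] \<open>u \<noteq> x\<close> \<open>w \<noteq> y\<close> \<open>x \<noteq> w\<close> \<open>y \<noteq> u\<close>
    unfolding deg_def by (auto simp: of_bool_def split: if_splits)
  moreover have "card (edges_between cls (switch u x w y E) i j) = card (edges_between cls E i j)" for i j
  proof -
    let ?P = "\<lambda>e. \<exists>p q. e = {p, q} \<and> p \<noteq> q \<and> cls p = i \<and> cls q = j"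
    have "?P {u, x} = ?P {w, x}" "?P {w, y} = ?P {u, y}"
      using doubleton_between_iff[of u x cls i j] doubleton_between_iff[of w x cls i j]
        doubleton_between_iff[of w y cls i j] doubleton_between_iff[of u y cls i j]
        \<open>u \<noteq> x\<close> \<open>w \<noteq> y\<close> \<open>x \<noteq> w\<close> \<open>y \<noteq> u\<close> \<open>cls u = cls w\<close>
      by auto
    then show ?thesis
      using count[of ?P] unfolding edges_between_def by simp
  qed
  ultimately show ?thesis using G unfolding in_VdD_def by simp
qed

lemma deg_constrained_part_switch:
  assumes sg: "simple_graph_on {1..n} E"
    and edges: "{u, x} \<in> E" "{w, y} \<in> E" "{w, x} \<notin> E" "{u, y} \<notin> E"
    and "u \<noteq> w" "x \<noteq> w"
    and Q: "constrained_edge cls D {u, x}" "constrained_edge cls D {w, x}"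
      "\<not> constrained_edge cls D {w, y}" "\<not> constrained_edge cls D {u, y}"
  defines "h \<equiv> \<lambda>F. deg (constrained_part cls D F)"
  shows "h (switch u x w y E) u + 1 = h E u" "h (switch u x w y E) w = h E w + 1"
    and "\<And>v. v \<noteq> u \<Longrightarrow> v \<noteq> w \<Longrightarrow> h (switch u x w y E) v = h E v"
proof -
  have "u \<noteq> x" using sg edges(1) unfolding simple_graph_on_def by fastforce
  have "{u, x} \<noteq> {w, y}" "{w, x} \<noteq> {u, y}" using Q by auto
  note count = card_filter_switch[OF simple_graph_on_finite[OF sg] edges this]
  have h: "h (switch u x w y E) v + of_bool (v \<in> {u, x}) = h E v + of_bool (v \<in> {w, x})" for v
    using count[of "\<lambda>e. constrained_edge cls D e \<and> v \<in> e"] Q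
    unfolding h_def deg_constrained_part by simp
  show "h (switch u x w y E) u + 1 = h E u" using h[of u] \<open>u \<noteq> w\<close> \<open>u \<noteq> x\<close> by simp
  show "h (switch u x w y E) w = h E w + 1" using h[of w] \<open>u \<noteq> w\<close> \<open>x \<noteq> w\<close> by simp
  show "h (switch u x w y E) v = h E v" if "v \<noteq> u" "v \<noteq> w" for v
    using h[of v] that by (cases "v = x") auto
qed

lemma exists_switch:
  assumes part: "is_partition n k cls" and sym: "\<forall>i<k. \<forall>j<k. D i j = D j i"
    and G: "in_VdD n k cls d D E"
    and uw: "u \<in> cls_set n cls i" "w \<in> cls_set n cls i"
    and gap: "deg (constrained_part cls D E) w + 2 \<le> deg (constrained_part cls D E) u"
  obtains x y where "{u, x} \<in> E" "{w, y} \<in> E" "{w, x} \<notin> E" "{u, y} \<notin> E" "x \<noteq> w" "y \<noteq> u"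
    "constrained_edge cls D {u, x}" "constrained_edge cls D {w, x}"
    "\<not> constrained_edge cls D {w, y}" "\<not> constrained_edge cls D {u, y}"
proof -
  let ?Q = "constrained_edge cls D"
  define NH where "NH v = {x. {v, x} \<in> E \<and> ?Q {v, x}}" for v
  define NS where "NS v = {x. {v, x} \<in> E \<and> \<not> ?Q {v, x}}" for v
  have sg: "simple_graph_on {1..n} E" using G unfolding in_VdD_def by simp
  have "NH v \<subseteq> {1..n}" "NS v \<subseteq> {1..n}" for v
    using sg unfolding NH_def NS_def simple_graph_on_def by auto
  then have fin: "finite (NH v)" "finite (NS v)" for v
    by (meson finite_atLeastAtMost finite_subset)+
  have degH: "deg (constrained_part cls D E) v = card (NH v)" for v
    unfolding deg_constrained_part NH_def by (rule card_incident_eq_card_neighbours[OF sg])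
  have degE: "deg E v = card (NH v) + card (NS v)" for v
  proof -
    have "deg E v = card {x. {v, x} \<in> E \<and> True}"
      unfolding deg_def using card_incident_eq_card_neighbours[OF sg, of "\<lambda>_. True"] by simp
    also have "{x. {v, x} \<in> E \<and> True} = NH v \<union> NS v" unfolding NH_def NS_def by auto
    also have "card (NH v \<union> NS v) = card (NH v) + card (NS v)"
      using fin by (intro card_Un_disjoint) (auto simp: NH_def NS_def)
    finally show ?thesis .
  qed
  have "deg E u = deg E w"
    using G uw unfolding in_VdD_def cls_set_def by auto
  then have "card (NH w) + 2 \<le> card (NH u)" "card (NS u) + 2 \<le> card (NS w)"
    using gap unfolding degE degH by auto
  then obtain x y where x: "x \<in> NH u" "x \<noteq> w" "x \<notin> NH w" and y: "y \<in> NS w" "y \<noteq> u" "y \<notin> NS u"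
    using exists_not_in_smaller_card fin by metis
  have "\<forall>v\<in>{1..n}. cls v < k" "u \<in> {1..n}" "w \<in> {1..n}" "cls u = cls w"
    using part uw unfolding is_partition_def cls_set_def by auto
  moreover have "x \<in> {1..n}" "y \<in> {1..n}"
    using x(1) y(1) sg unfolding NH_def NS_def simple_graph_on_def by auto
  ultimately have "?Q {w, x} = ?Q {u, x}" "?Q {u, y} = ?Q {w, y}"
    using constrained_edge_doubleton_iff[OF sym] by metis+
  then show ?thesis using that x y unfolding NH_def NS_def by auto
qed

lemma in_VdD_smaller_potential:
  assumes "is_partition n k cls" "\<forall>i<k. \<forall>j<k. D i j = D j i" "in_VdD n k cls d D E"
    and uw: "u \<in> cls_set n cls i" "w \<in> cls_set n cls i"
    and gap: "deg (constrained_part cls D E) w + 2 \<le> deg (constrained_part cls D E) u"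
  shows "\<exists>E'. in_VdD n k cls d D E' \<and> potential n cls D E' < potential n cls D E"
proof -
  obtain x y where xy: "{u, x} \<in> E" "{w, y} \<in> E" "{w, x} \<notin> E" "{u, y} \<notin> E" "x \<noteq> w" "y \<noteq> u"
    and Q: "constrained_edge cls D {u, x}" "constrained_edge cls D {w, x}"
      "\<not> constrained_edge cls D {w, y}" "\<not> constrained_edge cls D {u, y}"
    using exists_switch[OF assms] .
  have "u \<noteq> w" using gap by auto
  have sg: "simple_graph_on {1..n} E" using assms(3) unfolding in_VdD_def by simp
  have "in_VdD n k cls d D (switch u x w y E)"
    using in_VdD_switch[OF assms(3) _ xy(1-4) \<open>u \<noteq> w\<close> xy(5,6)] uw unfolding cls_set_def by simp
  moreover have "potential n cls D (switch u x w y E) < potential n cls D E"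
    unfolding potential_def
    using uw \<open>u \<noteq> w\<close> gap deg_constrained_part_switch[OF sg xy(1-4) \<open>u \<noteq> w\<close> xy(5) Q]
    by (intro sum_squares_less_after_transfer) (auto simp: cls_set_def)
  ultimately show ?thesis by blast
qed

lemma unbalanced_class_gap:
  assumes "is_partition n k cls" "in_VdD n k cls d D E" "\<not> balanced_VdD n k cls d D E"
  obtains i u w where "u \<in> cls_set n cls i" "w \<in> cls_set n cls i"
    "deg (constrained_part cls D E) w + 2 \<le> deg (constrained_part cls D E) u"
proof -
  let ?h = "deg (constrained_part cls D E)"
  obtain i where "i < k" and gap: "Max (?h ` cls_set n cls i) - Min (?h ` cls_set n cls i) > 1"
    using assms(2,3) unfolding balanced_VdD_def by (auto simp: not_le)
  then have "cls_set n cls i \<noteq> {}" "finite (cls_set n cls i)"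
    using assms(1) unfolding is_partition_def cls_set_def by auto
  then have "Max (?h ` cls_set n cls i) \<in> ?h ` cls_set n cls i"
    "Min (?h ` cls_set n cls i) \<in> ?h ` cls_set n cls i" by auto
  then show ?thesis using that gap by fastforce
qed

theorem lemma1:
  fixes n k :: nat and cls d :: "nat \<Rightarrow> nat" and D :: "nat \<Rightarrow> nat \<Rightarrow> nat option"
  assumes "is_partition n k cls"
    and "\<forall>i<k. \<forall>j<k. D i j = D j i"
    and "\<exists>G. in_VdD n k cls d D G"
  shows "\<exists>G. balanced_VdD n k cls d D G"
proof -
  obtain G where G: "in_VdD n k cls d D G"
    and min: "\<And>G'. in_VdD n k cls d D G' \<Longrightarrow> potential n cls D G \<le> potential n cls D G'"
    using ex_has_least_nat[of "in_VdD n k cls d D" _ "potential n cls D"] assms(3) by metis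
  have "balanced_VdD n k cls d D G"
  proof (rule ccontr)
    assume "\<not> balanced_VdD n k cls d D G"
    then obtain i u w where "u \<in> cls_set n cls i" "w \<in> cls_set n cls i"
      "deg (constrained_part cls D G) w + 2 \<le> deg (constrained_part cls D G) u"
      using unbalanced_class_gap[OF assms(1) G] by blast
    then show False
      using in_VdD_smaller_potential[OF assms(1,2) G] min leD by blast
  qed
  then show ?thesis by blast
qed

end
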